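(* Let $\mu$ be a probability measure on a finitely generated group $\Gamma$ inducing an irreducible and aperiodic random walk $p(x,y)=\mu(x^{-1}y)$ with spectral radius $\rho$, which satisfies a ratio limit theorem with kernel $h$ such that $Ph=hP=\rho\,h$ (matrix products). Let $R_\mu=\{y\in\Gamma: H(x,y)=H(x,e)\text{ for all }x\in\Gamma\}$. Suppose that $R_\mu$ is infinite, and let $\xi$ be its unique accumulation point in the ratio limit boundary. If $x\mapsto H(x,\xi)$ is a minimal $\rho$-harmonic function, then $g\xi=\xi$ for every $g\in\Gamma$.
   Context: Ratio limit theorem: $h(x,y)=\lim_n p^{(n)}(x,y)/p^{(n)}(e,e)\in(0,\infty)$ exists for all $x,y\in\Gamma$ ($e$ the identity); ratio limit kernel $H(x,y)=h(x,y)/h(e,y)$; by group invariance $h(gx,gy)=h(x,y)$. The ratio limit compactification is the unique (up to homeomorphism fixing $\Gamma$) compact Hausdorff space containing $\Gamma$ as discrete open dense subset to which each $H(x,\cdot)$ extends continuously (extension also denoted $H$) and whose boundary points are separated by these extensions; the left action of $\Gamma$ on itself extends to a continuous action on it. $R_\mu$ is a subgroup; if infinite, it has a unique accumulation point $\xi$ in the boundary with $H(x,y)=H(x,\xi)$ for $y\in R_\mu$. A function $f:\Gamma\to\mathbb R$ is $\rho$-harmonic if $\sum_w p(x,w)f(w)=\rho f(x)$ for all $x$; a positive $\rho$-harmonic $f$ is minimal if $f(e)=1$ and $f$ is not a convex combination of two distinct positive $\rho$-harmonic functions with value $1$ at $e$. *)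

theory Defs
  imports "HOL-Analysis.Analysis" "HOL-Algebra.Generated_Groups"
begin

definition rw_p :: "('a, 'b) monoid_scheme \<Rightarrow> ('a \<Rightarrow> real) \<Rightarrow> 'a \<Rightarrow> 'a \<Rightarrow> real" where
  "rw_p G mu x y = mu (inv\<^bsub>G\<^esub> x \<otimes>\<^bsub>G\<^esub> y)"

fun rw_pn :: "('a, 'b) monoid_scheme \<Rightarrow> ('a \<Rightarrow> real) \<Rightarrow> nat \<Rightarrow> 'a \<Rightarrow> 'a \<Rightarrow> real" where
  "rw_pn G mu 0 x y = (if x = y then 1 else 0)"
| "rw_pn G mu (Suc n) x y = (\<Sum>\<^sub>\<infinity>w\<in>carrier G. rw_p G mu x w * rw_pn G mu n w y)"

definition finitely_generated :: "('a, 'b) monoid_scheme \<Rightarrow> bool" where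
  "finitely_generated G \<longleftrightarrow> (\<exists>S. finite S \<and> S \<subseteq> carrier G \<and> generate G S = carrier G)"

definition prob_on_group :: "('a, 'b) monoid_scheme \<Rightarrow> ('a \<Rightarrow> real) \<Rightarrow> bool" where
  "prob_on_group G mu \<longleftrightarrow> (\<forall>x\<in>carrier G. mu x \<ge> 0) \<and> (mu has_sum 1) (carrier G)"

definition rw_irreducible :: "('a, 'b) monoid_scheme \<Rightarrow> ('a \<Rightarrow> real) \<Rightarrow> bool" where
  "rw_irreducible G mu \<longleftrightarrow> (\<forall>x\<in>carrier G. \<forall>y\<in>carrier G. \<exists>n. rw_pn G mu n x y > 0)"

definition rw_aperiodic :: "('a, 'b) monoid_scheme \<Rightarrow> ('a \<Rightarrow> real) \<Rightarrow> bool" where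
  "rw_aperiodic G mu \<longleftrightarrow> Gcd {n. n \<ge> 1 \<and> rw_pn G mu n \<one>\<^bsub>G\<^esub> \<one>\<^bsub>G\<^esub> > 0} = 1"

definition rw_spectral_radius :: "('a, 'b) monoid_scheme \<Rightarrow> ('a \<Rightarrow> real) \<Rightarrow> real" where
  "rw_spectral_radius G mu =
     real_of_ereal (limsup (\<lambda>n. ereal (root n (rw_pn G mu n \<one>\<^bsub>G\<^esub> \<one>\<^bsub>G\<^esub>))))"

definition rho_harmonic :: "('a, 'b) monoid_scheme \<Rightarrow> ('a \<Rightarrow> real) \<Rightarrow> real \<Rightarrow> ('a \<Rightarrow> real) \<Rightarrow> bool" where
  "rho_harmonic G mu \<rho> f \<longleftrightarrow>
     (\<forall>x\<in>carrier G. ((\<lambda>w. rw_p G mu x w * f w) has_sum (\<rho> * f x)) (carrier G))"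

definition pos_rho_harmonic :: "('a, 'b) monoid_scheme \<Rightarrow> ('a \<Rightarrow> real) \<Rightarrow> real \<Rightarrow> ('a \<Rightarrow> real) \<Rightarrow> bool" where
  "pos_rho_harmonic G mu \<rho> f \<longleftrightarrow> (\<forall>x\<in>carrier G. f x > 0) \<and> rho_harmonic G mu \<rho> f"

definition minimal_rho_harmonic :: "('a, 'b) monoid_scheme \<Rightarrow> ('a \<Rightarrow> real) \<Rightarrow> real \<Rightarrow> ('a \<Rightarrow> real) \<Rightarrow> bool" where
  "minimal_rho_harmonic G mu \<rho> f \<longleftrightarrow>
     pos_rho_harmonic G mu \<rho> f \<and> f \<one>\<^bsub>G\<^esub> = 1 \<and>
     \<not> (\<exists>f1 f2 t. pos_rho_harmonic G mu \<rho> f1 \<and> pos_rho_harmonic G mu \<rho> f2 \<and>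
           f1 \<one>\<^bsub>G\<^esub> = 1 \<and> f2 \<one>\<^bsub>G\<^esub> = 1 \<and> (\<exists>x\<in>carrier G. f1 x \<noteq> f2 x) \<and>
           0 < t \<and> t < 1 \<and> (\<forall>x\<in>carrier G. f x = t * f1 x + (1 - t) * f2 x))"

definition ratio_kernel :: "('a, 'b) monoid_scheme \<Rightarrow> ('a \<Rightarrow> 'a \<Rightarrow> real) \<Rightarrow> 'a \<Rightarrow> 'a \<Rightarrow> real" where
  "ratio_kernel G h x y = h x y / h \<one>\<^bsub>G\<^esub> y"

definition R_mu :: "('a, 'b) monoid_scheme \<Rightarrow> ('a \<Rightarrow> 'a \<Rightarrow> real) \<Rightarrow> 'a set" where
  "R_mu G h = {y\<in>carrier G. \<forall>x\<in>carrier G. ratio_kernel G h x y = ratio_kernel G h x \<one>\<^bsub>G\<^esub>}"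

text \<open>(iota, Hext) is a ratio limit compactification: the whole type 'c is a compact
  Hausdorff space containing the embedded group as a discrete open dense subset, each
  H(x,.) extends continuously to Hext x, and boundary points are separated by the Hext x.\<close>
definition ratio_limit_compactification ::
  "('a, 'b) monoid_scheme \<Rightarrow> ('a \<Rightarrow> 'a \<Rightarrow> real) \<Rightarrow> ('a \<Rightarrow> 'c::t2_space) \<Rightarrow> ('a \<Rightarrow> 'c \<Rightarrow> real) \<Rightarrow> bool" where
  "ratio_limit_compactification G h iota Hext \<longleftrightarrow>
     compact (UNIV :: 'c set) \<and>
     inj_on iota (carrier G) \<and>
     (\<forall>g\<in>carrier G. open {iota g}) \<and>
     closure (iota ` carrier G) = UNIV \<and>
     (\<forall>x\<in>carrier G. continuous_on UNIV (Hext x) \<and>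
        (\<forall>y\<in>carrier G. Hext x (iota y) = ratio_kernel G h x y)) \<and>
     (\<forall>a b. a \<notin> iota ` carrier G \<longrightarrow> b \<notin> iota ` carrier G \<longrightarrow> a \<noteq> b \<longrightarrow>
        (\<exists>x\<in>carrier G. Hext x a \<noteq> Hext x b))"

definition extends_left_action ::
  "('a, 'b) monoid_scheme \<Rightarrow> ('a \<Rightarrow> 'c::topological_space) \<Rightarrow> ('a \<Rightarrow> 'c \<Rightarrow> 'c) \<Rightarrow> bool" where
  "extends_left_action G iota act \<longleftrightarrow>
     (\<forall>g\<in>carrier G. continuous_on UNIV (act g) \<and>
        (\<forall>y\<in>carrier G. act g (iota y) = iota (g \<otimes>\<^bsub>G\<^esub> y)))"

end

theory Submission
  imports Defs
begin

text \<open>Since \<open>\<xi>\<close> is a limit of \<open>R_mu\<close>, continuity gives \<open>H(\<cdot>,\<xi>) = H(\<cdot>,\<one>)\<close>. For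
  \<open>y \<in> R_mu\<close> the equation \<open>hP = \<rho> h\<close> writes \<open>H(\<cdot>,y) = H(\<cdot>,\<one>)\<close> as a convex combination of
  the \<open>H(\<cdot>,v)\<close> over the predecessors \<open>v\<close> of \<open>y\<close>, so minimality forces \<open>H(\<cdot>,v) = H(\<cdot>,\<one>)\<close>,
  i.e. \<open>v \<in> R_mu\<close>. By irreducibility \<open>R_mu\<close> is the whole group; then every \<open>H(x,\<cdot>)\<close> is
  constant on the compactification, the boundary points cannot be separated, and the boundary
  is the single point \<open>\<xi>\<close>, which the extended action must fix.\<close>

locale group_random_walk = group G for G (structure) +
  fixes mu :: "'a \<Rightarrow> real"
  assumes prob: "prob_on_group G mu"
begin

lemma rw_p_nonneg: "x \<in> carrier G \<Longrightarrow> y \<in> carrier G \<Longrightarrow> rw_p G mu x y \<ge> 0"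
  using prob by (auto simp: prob_on_group_def rw_p_def)

lemma rw_pn_nonneg: "x \<in> carrier G \<Longrightarrow> y \<in> carrier G \<Longrightarrow> rw_pn G mu n x y \<ge> 0"
proof (induction n arbitrary: x)
  case (Suc n)
  then show ?case by (auto intro!: infsum_nonneg mult_nonneg_nonneg rw_p_nonneg)
qed simp

lemma rw_pn_Suc_pos_obtain_step:
  assumes "rw_pn G mu (Suc n) x y > 0" "x \<in> carrier G" "y \<in> carrier G"
  obtains w where "w \<in> carrier G" "rw_p G mu x w > 0" "rw_pn G mu n w y > 0"
proof -
  have "\<exists>w\<in>carrier G. rw_p G mu x w * rw_pn G mu n w y \<noteq> 0"
  proof (rule ccontr)
    assume "\<not> ?thesis"
    then have "rw_pn G mu (Suc n) x y = 0" by (simp add: infsum_0)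
    with assms(1) show False by simp
  qed
  then obtain w where w: "w \<in> carrier G" "rw_p G mu x w * rw_pn G mu n w y \<noteq> 0" by blast
  have "rw_p G mu x w \<ge> 0" "rw_pn G mu n w y \<ge> 0"
    using w(1) assms(2,3) by (auto intro: rw_p_nonneg rw_pn_nonneg)
  with w show thesis by (intro that) (auto simp: less_le)
qed

lemma carrier_subset_if_closed_under_predecessors:
  assumes irred: "rw_irreducible G mu" and y: "y \<in> S"
    and pred: "\<And>w z. z \<in> S \<Longrightarrow> w \<in> carrier G \<Longrightarrow> rw_p G mu w z > 0 \<Longrightarrow> w \<in> S"
    and S: "S \<subseteq> carrier G"
  shows "carrier G \<subseteq> S"
proof
  fix x assume x: "x \<in> carrier G"
  have "x \<in> S" if "rw_pn G mu n x y > 0" "x \<in> carrier G" for n x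
    using that
  proof (induction n arbitrary: x)
    case 0
    then show ?case using y by (simp split: if_splits)
  next
    case (Suc n)
    moreover have "y \<in> carrier G" using y S by blast
    ultimately obtain w where "w \<in> carrier G" "rw_p G mu x w > 0" "rw_pn G mu n w y > 0"
      by (blast elim: rw_pn_Suc_pos_obtain_step)
    with Suc.IH pred Suc.prems(2) show ?case by blast
  qed
  moreover obtain n where "rw_pn G mu n x y > 0"
    using irred x y S unfolding rw_irreducible_def by blast
  ultimately show "x \<in> S" using x by blast
qed

end

lemma rho_harmonic_lincomb:
  assumes "rho_harmonic G mu \<rho> f" "rho_harmonic G mu \<rho> g"
  shows "rho_harmonic G mu \<rho> (\<lambda>x. a * f x + b * g x)"
  unfolding rho_harmonic_def
proof
  fix x assume x: "x \<in> carrier G"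
  have "((\<lambda>w. a * (rw_p G mu x w * f w) + b * (rw_p G mu x w * g w))
          has_sum (a * (\<rho> * f x) + b * (\<rho> * g x))) (carrier G)"
    using assms x unfolding rho_harmonic_def by (intro has_sum_add has_sum_cmult_right) auto
  then show "((\<lambda>w. rw_p G mu x w * (a * f w + b * g w)) has_sum (\<rho> * (a * f x + b * g x)))
      (carrier G)"
    by (simp add: algebra_simps)
qed

context group
begin

text \<open>Evaluating at \<open>\<one>\<close> shows that the weights sum to \<open>1\<close>; splitting off the \<open>w\<close>-term then
  decomposes \<open>F\<close> as in the definition of minimality.\<close>
lemma minimal_rho_harmonic_component_eq:
  fixes F :: "'a \<Rightarrow> real" and f :: "'a \<Rightarrow> 'a \<Rightarrow> real"
  assumes min: "minimal_rho_harmonic G mu \<rho> F"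
    and repr: "\<And>x. x \<in> carrier G \<Longrightarrow> ((\<lambda>v. c v * f v x) has_sum F x) (carrier G)"
    and c_nonneg: "\<And>v. v \<in> carrier G \<Longrightarrow> c v \<ge> 0"
    and f_harm: "\<And>v. v \<in> carrier G \<Longrightarrow> pos_rho_harmonic G mu \<rho> (f v)"
    and f_one: "\<And>v. v \<in> carrier G \<Longrightarrow> f v \<one> = 1"
    and w: "w \<in> carrier G" and cw: "c w > 0"
  shows "\<forall>x\<in>carrier G. f w x = F x"
proof -
  have F_harm: "pos_rho_harmonic G mu \<rho> F" and F_one: "F \<one> = 1"
    and F_extreme: "\<not> (\<exists>f1 f2 t. pos_rho_harmonic G mu \<rho> f1 \<and> pos_rho_harmonic G mu \<rho> f2 \<and>
           f1 \<one> = 1 \<and> f2 \<one> = 1 \<and> (\<exists>x\<in>carrier G. f1 x \<noteq> f2 x) \<and>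
           0 < t \<and> t < 1 \<and> (\<forall>x\<in>carrier G. F x = t * f1 x + (1 - t) * f2 x))"
    using min unfolding minimal_rho_harmonic_def by auto
  have f_pos: "f v x > 0" if "v \<in> carrier G" "x \<in> carrier G" for v x
    using f_harm that unfolding pos_rho_harmonic_def by blast
  have partial_le: "(\<Sum>v\<in>B. c v * f v x) \<le> F x"
    if "finite B" "B \<subseteq> carrier G" "x \<in> carrier G" for B x
    using that by (intro finite_sum_le_has_sum[OF repr]) (auto intro!: mult_nonneg_nonneg c_nonneg
        less_imp_le[OF f_pos])
  consider (single) "\<forall>v\<in>carrier G - {w}. c v = 0"
    | (other) v0 where "v0 \<in> carrier G" "v0 \<noteq> w" "c v0 > 0"
    using c_nonneg by (force simp: less_le)
  then show ?thesis
  proof cases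
    case single
    have F_eq: "F x = c w * f w x" if x: "x \<in> carrier G" for x
    proof (rule has_sum_unique[OF repr[OF x]])
      show "((\<lambda>v. c v * f v x) has_sum (c w * f w x)) (carrier G)"
        using w single by (intro has_sum_finite_neutralI[of "{w}"]) auto
    qed
    then have "c w = 1" using F_one f_one[OF w] by simp
    with F_eq show ?thesis by simp
  next
    case other
    have two_terms: "c w * f w x + c v0 * f v0 x \<le> F x" if "x \<in> carrier G" for x
      using partial_le[of "{w, v0}" x] other w that by simp
    have "c w + c v0 \<le> 1" using two_terms[of \<one>] F_one f_one w other by simp
    with other have cw1: "c w < 1" by simp
    have cw1': "1 - c w \<noteq> 0" using cw1 by simp
    define f2 where "f2 x = (F x - c w * f w x) / (1 - c w)" for x
    have F_decomp: "F x = c w * f w x + (1 - c w) * f2 x" for x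
      using cw1' by (simp add: f2_def)
    have f2_lincomb: "f2 = (\<lambda>x. 1 / (1 - c w) * F x + - (c w / (1 - c w)) * f w x)"
      by (auto simp: f2_def diff_divide_distrib)
    have f2_harm: "pos_rho_harmonic G mu \<rho> f2"
      unfolding pos_rho_harmonic_def
    proof
      show "\<forall>x\<in>carrier G. f2 x > 0"
      proof
        fix x assume x: "x \<in> carrier G"
        have "(1 - c w) * f2 x \<ge> c v0 * f v0 x" using two_terms[OF x] F_decomp[of x] by simp
        moreover have "c v0 * f v0 x > 0" using other f_pos x by simp
        ultimately have "(1 - c w) * f2 x > 0" by linarith
        then show "f2 x > 0" using cw1 by (simp add: zero_less_mult_iff)
      qed
      show "rho_harmonic G mu \<rho> f2"
        unfolding f2_lincomb using F_harm f_harm[OF w]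
        by (intro rho_harmonic_lincomb) (auto simp: pos_rho_harmonic_def)
    qed
    have "f2 \<one> = 1" using F_one f_one[OF w] cw1' by (simp add: f2_def)
    then have "\<forall>x\<in>carrier G. f w x = f2 x"
      using F_extreme f_harm[OF w] f2_harm f_one[OF w] F_decomp cw cw1 by blast
    then show ?thesis
      using F_decomp by (metis add_diff_cancel_left' diff_add_cancel distrib_right mult_1)
  qed
qed

end

locale ratio_limit_kernel = group_random_walk +
  fixes h :: "'a \<Rightarrow> 'a \<Rightarrow> real" and \<rho> :: real
  assumes h_pos: "\<And>x y. x \<in> carrier G \<Longrightarrow> y \<in> carrier G \<Longrightarrow> h x y > 0"
    and Ph: "\<And>x y. x \<in> carrier G \<Longrightarrow> y \<in> carrier G \<Longrightarrow>
      ((\<lambda>w. rw_p G mu x w * h w y) has_sum (\<rho> * h x y)) (carrier G)"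
    and hP: "\<And>x y. x \<in> carrier G \<Longrightarrow> y \<in> carrier G \<Longrightarrow>
      ((\<lambda>w. h x w * rw_p G mu w y) has_sum (\<rho> * h x y)) (carrier G)"
begin

abbreviation H :: "'a \<Rightarrow> 'a \<Rightarrow> real" where
  "H \<equiv> ratio_kernel G h"

lemma ratio_kernel_pos: "x \<in> carrier G \<Longrightarrow> y \<in> carrier G \<Longrightarrow> H x y > 0"
  by (simp add: ratio_kernel_def h_pos)

lemma ratio_kernel_one_left: "y \<in> carrier G \<Longrightarrow> H \<one> y = 1"
  using h_pos[of \<one> y] by (simp add: ratio_kernel_def)

lemma ratio_kernel_pos_rho_harmonic:
  assumes y: "y \<in> carrier G"
  shows "pos_rho_harmonic G mu \<rho> (\<lambda>x. H x y)"
  unfolding pos_rho_harmonic_def rho_harmonic_def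
proof (intro conjI ballI)
  fix x assume x: "x \<in> carrier G"
  show "H x y > 0" using x y by (rule ratio_kernel_pos)
  show "((\<lambda>w. rw_p G mu x w * H w y) has_sum (\<rho> * H x y)) (carrier G)"
    using has_sum_cmult_right[OF Ph[OF x y], of "1 / h \<one> y"]
    by (simp add: ratio_kernel_def)
qed

lemma rho_pos_if_rw_p_pos:
  assumes "w \<in> carrier G" "y \<in> carrier G" "rw_p G mu w y > 0"
  shows "\<rho> > 0"
proof -
  have "h \<one> w * rw_p G mu w y \<le> \<rho> * h \<one> y"
    using assms finite_sum_le_has_sum[OF hP[of \<one> y], of "{w}"]
    by (auto intro!: mult_nonneg_nonneg less_imp_le[OF h_pos] rw_p_nonneg)
  moreover have "h \<one> w * rw_p G mu w y > 0" using assms h_pos by simp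
  ultimately have "\<rho> * h \<one> y > 0" by linarith
  then show ?thesis using h_pos[of \<one> y] assms(2) by (simp add: zero_less_mult_iff)
qed

text \<open>Dividing \<open>hP\<close> by \<open>\<rho> h(\<one>,y)\<close> writes \<open>H(\<cdot>,y)\<close> as a convex combination of the
  \<open>H(\<cdot>,v)\<close> over the predecessors \<open>v\<close> of \<open>y\<close>.\<close>
lemma ratio_kernel_has_sum_predecessors:
  assumes "\<rho> \<noteq> 0" "x \<in> carrier G" "y \<in> carrier G"
  shows "((\<lambda>v. h \<one> v * rw_p G mu v y / (\<rho> * h \<one> y) * H x v) has_sum H x y) (carrier G)"
proof -
  have "((\<lambda>v. h x v * rw_p G mu v y / (\<rho> * h \<one> y)) has_sum (\<rho> * h x y / (\<rho> * h \<one> y)))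
      (carrier G)"
    using assms by (intro has_sum_divide_const hP)
  also have "\<rho> * h x y / (\<rho> * h \<one> y) = H x y"
    using assms(1) by (simp add: ratio_kernel_def)
  finally show ?thesis
  proof (rule has_sum_cong[THEN iffD1, rotated])
    fix v assume "v \<in> carrier G"
    then show "h x v * rw_p G mu v y / (\<rho> * h \<one> y) =
        h \<one> v * rw_p G mu v y / (\<rho> * h \<one> y) * H x v"
      using h_pos[of \<one> v] by (simp add: ratio_kernel_def)
  qed
qed

lemma R_mu_closed_under_predecessors:
  assumes min: "minimal_rho_harmonic G mu \<rho> F"
    and F: "\<And>x. x \<in> carrier G \<Longrightarrow> F x = H x \<one>"
    and y: "y \<in> R_mu G h" and w: "w \<in> carrier G" and pwy: "rw_p G mu w y > 0"
  shows "w \<in> R_mu G h"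
proof -
  have yG: "y \<in> carrier G" using y by (simp add: R_mu_def)
  define c where "c v = h \<one> v * rw_p G mu v y / (\<rho> * h \<one> y)" for v
  have \<rho>: "\<rho> > 0" using w yG pwy by (rule rho_pos_if_rw_p_pos)
  have "\<forall>x\<in>carrier G. H x w = F x"
  proof (rule minimal_rho_harmonic_component_eq[OF min, of c "\<lambda>v x. H x v"])
    fix x assume x: "x \<in> carrier G"
    have "F x = H x y" using F[OF x] y x by (simp add: R_mu_def)
    then show "((\<lambda>v. c v * H x v) has_sum F x) (carrier G)"
      unfolding c_def using \<rho> x yG by (simp only:) (rule ratio_kernel_has_sum_predecessors, auto)
  next
    show "c v \<ge> 0" if "v \<in> carrier G" for v
      unfolding c_def using that yG \<rho>
      by (intro divide_nonneg_pos mult_nonneg_nonneg)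
        (auto intro: less_imp_le h_pos rw_p_nonneg mult_pos_pos)
    show "c w > 0"
      unfolding c_def using w yG \<rho> h_pos[of \<one>] pwy by simp
  qed (use w in \<open>auto intro: ratio_kernel_pos_rho_harmonic ratio_kernel_one_left\<close>)
  then show ?thesis using w F by (simp add: R_mu_def)
qed

lemma R_mu_eq_carrier:
  assumes "rw_irreducible G mu" "minimal_rho_harmonic G mu \<rho> F"
    and "\<And>x. x \<in> carrier G \<Longrightarrow> F x = H x \<one>"
  shows "R_mu G h = carrier G"
proof
  show "R_mu G h \<subseteq> carrier G" by (auto simp: R_mu_def)
  show "carrier G \<subseteq> R_mu G h"
  proof (rule carrier_subset_if_closed_under_predecessors[where y = \<one>])
    show "\<one> \<in> R_mu G h" by (simp add: R_mu_def)
    show "w \<in> R_mu G h" if "z \<in> R_mu G h" "w \<in> carrier G" "rw_p G mu w z > 0" for w z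
      using assms(2,3) that by (rule R_mu_closed_under_predecessors)
  qed (use assms(1) in \<open>auto simp: R_mu_def\<close>)
qed

end

lemma islimpt_not_isolated: "\<xi> islimpt S \<Longrightarrow> (\<And>b. b \<in> B \<Longrightarrow> open {b}) \<Longrightarrow> \<xi> \<notin> B"
  using islimpt_UNIV_iff islimpt_subset by blast

lemma continuous_eq_if_eq_on_dense:
  fixes f g :: "'c::topological_space \<Rightarrow> 'd::t2_space"
  assumes "continuous_on UNIV f" "continuous_on UNIV g" "closure A = UNIV" "\<And>a. a \<in> A \<Longrightarrow> f a = g a"
  shows "f x = g x"
proof -
  have "closure A \<subseteq> {x. f x = g x}"
    using assms by (intro closure_minimal closed_Collect_eq) auto
  with assms(3) show ?thesis by auto
qed

lemma (in group) extends_left_action_inv_cancel: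
  fixes iota :: "'a \<Rightarrow> 'c::t2_space"
  assumes act: "extends_left_action G iota act" and dense: "closure (iota ` carrier G) = UNIV"
    and g: "g \<in> carrier G"
  shows "act (inv g) (act g a) = a"
proof (rule continuous_eq_if_eq_on_dense[OF _ continuous_on_id dense])
  have "continuous_on UNIV (act (inv g))" "continuous_on UNIV (act g)"
    using act g unfolding extends_left_action_def by auto
  then show "continuous_on UNIV (\<lambda>a. act (inv g) (act g a))"
    by (rule continuous_on_compose2[OF _ _ subset_UNIV])
  show "act (inv g) (act g b) = b" if "b \<in> iota ` carrier G" for b
  proof -
    from that obtain y where y: "y \<in> carrier G" "b = iota y" by blast
    then have "act (inv g) (act g b) = iota (inv g \<otimes> (g \<otimes> y))"
      using act g unfolding extends_left_action_def by simp
    with y g show ?thesis by (simp add: m_assoc[symmetric])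
  qed
qed

lemma (in group) extends_left_action_preserves_boundary:
  fixes iota :: "'a \<Rightarrow> 'c::t2_space"
  assumes act: "extends_left_action G iota act" and dense: "closure (iota ` carrier G) = UNIV"
    and g: "g \<in> carrier G" and a: "a \<notin> iota ` carrier G"
  shows "act g a \<notin> iota ` carrier G"
proof
  assume "act g a \<in> iota ` carrier G"
  then obtain z where z: "z \<in> carrier G" "act g a = iota z" by blast
  have "a = act (inv g) (iota z)"
    using extends_left_action_inv_cancel[OF act dense g, of a] z by simp
  also have "\<dots> = iota (inv g \<otimes> z)"
    using act g z unfolding extends_left_action_def by simp
  finally have "a \<in> iota ` carrier G" using g z by simp
  with a show False by contradiction
qed

lemma ratio_limit_compactification_Hext_accumulation_R_mu:
  assumes comp: "ratio_limit_compactification G h iota Hext"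
    and \<xi>: "\<xi> islimpt (iota ` R_mu G h)" and x: "x \<in> carrier G"
  shows "Hext x \<xi> = ratio_kernel G h x \<one>\<^bsub>G\<^esub>"
proof (rule continuous_constant_on_closure[where S = "iota ` R_mu G h"])
  have "continuous_on UNIV (Hext x)"
    using comp x unfolding ratio_limit_compactification_def by blast
  then show "continuous_on (closure (iota ` R_mu G h)) (Hext x)"
    by (rule continuous_on_subset) simp
  show "Hext x b = ratio_kernel G h x \<one>\<^bsub>G\<^esub>" if "b \<in> iota ` R_mu G h" for b
  proof -
    from that obtain y where y: "y \<in> R_mu G h" "b = iota y" by blast
    then have "y \<in> carrier G" by (simp add: R_mu_def)
    then have "Hext x b = ratio_kernel G h x y"
      using comp x y(2) unfolding ratio_limit_compactification_def by blast
    with y(1) x show ?thesis unfolding R_mu_def by simp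
  qed
  show "\<xi> \<in> closure (iota ` R_mu G h)" using \<xi> by (simp add: closure_def)
qed

lemma ratio_limit_compactification_boundary_subsingleton:
  assumes comp: "ratio_limit_compactification G h iota Hext" and R: "R_mu G h = carrier G"
    and a: "a \<notin> iota ` carrier G" and b: "b \<notin> iota ` carrier G"
  shows "a = b"
proof (rule ccontr)
  assume "a \<noteq> b"
  then obtain x where x: "x \<in> carrier G" and ne: "Hext x a \<noteq> Hext x b"
    using comp a b unfolding ratio_limit_compactification_def by blast
  have const: "Hext x c = ratio_kernel G h x \<one>\<^bsub>G\<^esub>" for c
  proof (rule continuous_eq_if_eq_on_dense[OF _ continuous_on_const, where A = "iota ` carrier G"])
    show "continuous_on UNIV (Hext x)" "closure (iota ` carrier G) = UNIV"
      using comp x unfolding ratio_limit_compactification_def by auto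
    show "Hext x d = ratio_kernel G h x \<one>\<^bsub>G\<^esub>" if "d \<in> iota ` carrier G" for d
    proof -
      from that obtain y where y: "y \<in> carrier G" "d = iota y" by blast
      then have "Hext x d = ratio_kernel G h x y"
        using comp x unfolding ratio_limit_compactification_def by simp
      also have "\<dots> = ratio_kernel G h x \<one>\<^bsub>G\<^esub>"
        using R y x unfolding R_mu_def by blast
      finally show ?thesis .
    qed
  qed
  from ne show False by (simp add: const)
qed

theorem proposition6p3:
  fixes G :: "('a, 'b) monoid_scheme"
    and mu :: "'a \<Rightarrow> real"
    and h :: "'a \<Rightarrow> 'a \<Rightarrow> real"
    and iota :: "'a \<Rightarrow> 'c::t2_space"
    and Hext :: "'a \<Rightarrow> 'c \<Rightarrow> real"
    and act :: "'a \<Rightarrow> 'c \<Rightarrow> 'c"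
    and \<xi> :: 'c
  assumes grp: "group G"
    and fg: "finitely_generated G"
    and prob: "prob_on_group G mu"
    and irred: "rw_irreducible G mu"
    and aper: "rw_aperiodic G mu"
    and ratio_lim: "\<forall>x\<in>carrier G. \<forall>y\<in>carrier G.
        (\<lambda>n. rw_pn G mu n x y / rw_pn G mu n \<one>\<^bsub>G\<^esub> \<one>\<^bsub>G\<^esub>) \<longlonglongrightarrow> h x y"
    and h_pos: "\<forall>x\<in>carrier G. \<forall>y\<in>carrier G. h x y > 0"
    and Ph: "\<forall>x\<in>carrier G. \<forall>y\<in>carrier G.
        ((\<lambda>w. rw_p G mu x w * h w y) has_sum (rw_spectral_radius G mu * h x y)) (carrier G)"
    and hP: "\<forall>x\<in>carrier G. \<forall>y\<in>carrier G.
        ((\<lambda>w. h x w * rw_p G mu w y) has_sum (rw_spectral_radius G mu * h x y)) (carrier G)"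
    and compactif: "ratio_limit_compactification G h iota Hext"
    and action: "extends_left_action G iota act"
    and R_inf: "infinite (R_mu G h)"
    and xi_acc: "\<xi> islimpt (iota ` R_mu G h)"
    and minimal: "minimal_rho_harmonic G mu (rw_spectral_radius G mu) (\<lambda>x. Hext x \<xi>)"
  shows "\<forall>g\<in>carrier G. act g \<xi> = \<xi>"
proof -
  interpret ratio_limit_kernel G mu h "rw_spectral_radius G mu"
    using grp prob h_pos Ph hP
    by (simp add: ratio_limit_kernel_def ratio_limit_kernel_axioms_def group_random_walk_def
        group_random_walk_axioms_def)
  have dense: "closure (iota ` carrier G) = UNIV"
    and isolated: "\<And>g. g \<in> carrier G \<Longrightarrow> open {iota g}"
    using compactif unfolding ratio_limit_compactification_def by auto
  have "\<And>x. x \<in> carrier G \<Longrightarrow> Hext x \<xi> = ratio_kernel G h x \<one>\<^bsub>G\<^esub>"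
    using compactif xi_acc by (rule ratio_limit_compactification_Hext_accumulation_R_mu)
  then have R: "R_mu G h = carrier G"
    by (rule R_mu_eq_carrier[OF irred minimal])
  have boundary: "\<xi> \<notin> iota ` carrier G"
    using xi_acc by (rule islimpt_not_isolated) (auto intro: isolated)
  show ?thesis
  proof
    fix g assume g: "g \<in> carrier G"
    have "act g \<xi> \<notin> iota ` carrier G"
      using action dense g boundary by (rule extends_left_action_preserves_boundary)
    with boundary show "act g \<xi> = \<xi>"
      using compactif R by (blast intro: ratio_limit_compactification_boundary_subsingleton)
  qed
qed

end
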